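(* Let $\vec w\in\mathbb R^n$ be $\tau$-regular with $\sum_i (w^{(i)})^2=1$, let $\gamma\in(0,1]$, and let $\mathcal D$ be any distribution on $\{0,1\}^n$. Let $\vec y$ be drawn from the $\gamma$-noisy version $\tilde{\mathcal D}$ of $\mathcal D$. Then for every interval $[a,b]$, $$\Pr\big[\langle \vec w,\vec y\rangle\in[a,b]\big]\le \frac{4|b-a|}{\sqrt\gamma}+\frac{4\tau}{\sqrt\gamma}+2e^{-\gamma^2/(2\tau^2)}.$$
   Context: A vector $\vec w\in\mathbb R^n$ is $\tau$-regular if $\max_i|w^{(i)}|\le \tau\|\vec w\|_2$. For a distribution $\mathcal D$ on $\{0,1\}^n$ and $\gamma\in[0,1]$, the $\gamma$-noisy version $\tilde{\mathcal D}$ is the distribution of $\vec y$ obtained by sampling $\vec x\sim\mathcal D$ and then, independently for each coordinate $i$, setting $y^{(i)}=x^{(i)}$ with probability $1-\gamma$ and $y^{(i)}=$ a fresh uniformly random bit with probability $\gamma$. *)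

theory Defs
  imports "HOL-Probability.Probability"
begin

text \<open>Vectors in R^n are functions nat => real indexed by {..<n}; points of {0,1}^n
  are functions nat => bool (coordinate i is 1 iff true), only coordinates < n matter.\<close>

definition tau_regular :: "nat \<Rightarrow> real \<Rightarrow> (nat \<Rightarrow> real) \<Rightarrow> bool" where
  "tau_regular n \<tau> w \<longleftrightarrow> (\<forall>i<n. \<bar>w i\<bar> \<le> \<tau> * sqrt (\<Sum>j<n. (w j)\<^sup>2))"

definition noisy_bit :: "real \<Rightarrow> bool \<Rightarrow> bool pmf" where
  "noisy_bit \<gamma> b = bind_pmf (bernoulli_pmf \<gamma>)
      (\<lambda>r. if r then bernoulli_pmf (1/2) else return_pmf b)"

definition noisy_version :: "nat \<Rightarrow> real \<Rightarrow> (nat \<Rightarrow> bool) pmf \<Rightarrow> (nat \<Rightarrow> bool) pmf" where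
  "noisy_version n \<gamma> D = bind_pmf D (\<lambda>x. Pi_pmf {..<n} False (\<lambda>i. noisy_bit \<gamma> (x i)))"

definition bit_inner :: "nat \<Rightarrow> (nat \<Rightarrow> real) \<Rightarrow> (nat \<Rightarrow> bool) \<Rightarrow> real" where
  "bit_inner n w y = (\<Sum>i<n. w i * (if y i then 1 else 0))"

end

theory Submission
  imports Defs
begin

text \<open>
  For a random variable X the Fejer kernel
  fejer a y = sin(a y)^2 / (a y^2) = integral over [0, 2a] of (1 - u/(2a)) cos(u y)
  is nonnegative and at least a constant times a on the window |y| <= h when
  a h <= 3/5, so P(|X - x0| <= h) is bounded by E[fejer a (X - x0)] / a, which in
  turn is bounded by integrating the characteristic function |E[cis(u X)]| over
  [0, 2a].  For X = <w, y> with y a noisy copy of a fixed x, the coordinates of y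
  are independent, so the characteristic function factors into one term per bit,
  each of squared modulus at most 1 - gamma sin(u w_i / 2)^2; regularity of w
  turns the product into a Gaussian exp(-c gamma u^2), whose half-line integral
  is explicit.  Choosing a of order 1/(tau + |b - a|) gives the per-x bound
  4 |b - a| / sqrt gamma + 4 tau / sqrt gamma, and averaging over x ~ D proves the
  theorem.
\<close>

lemma half_gaussian_integral_le:
  fixes c T :: real
  assumes c: "c > 0" and T: "T \<ge> 0"
  shows "integral {0..T} (\<lambda>u. exp (- c * u\<^sup>2)) \<le> sqrt pi / (2 * sqrt c)"
proof -
  have intg: "integrable lborel (\<lambda>v. indicator {0..} v *\<^sub>R exp (- v\<^sup>2) :: real)"
    and i0: "integral\<^sup>L lborel (\<lambda>v. indicator {0..} v *\<^sub>R exp (- v\<^sup>2) :: real) = sqrt pi / 2"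
    using gaussian_moment_0 by (auto simp: has_bochner_integral_iff)
  then have full: "((\<lambda>v. indicator {0..} v *\<^sub>R exp (- v\<^sup>2) :: real) has_integral sqrt pi / 2) UNIV"
    using has_integral_integral_lborel[OF intg] unfolding i0 by blast
  define S where "S = sqrt c * T"
  define J where "J = integral {0..S} (\<lambda>v. exp (- v\<^sup>2))"
  have J: "((\<lambda>v. exp (- v\<^sup>2)) has_integral J) {0..S}"
    unfolding J_def by (intro integrable_integral integrable_continuous_interval continuous_intros)
  then have "((\<lambda>v. if v \<in> {0..S} then exp (- v\<^sup>2) else 0) has_integral J) UNIV"
    by (simp only: has_integral_restrict_UNIV)
  then have J_le: "J \<le> sqrt pi / 2"
    by (rule has_integral_le[OF _ full]) (auto simp: indicator_def)
  have sc: "sqrt c \<noteq> 0" using c by simp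
  have img: "(\<lambda>x. x / sqrt c) ` {0..S} = {0..T}"
  proof
    show "(\<lambda>x. x / sqrt c) ` {0..S} \<subseteq> {0..T}" using c by (auto simp: S_def)
    show "{0..T} \<subseteq> (\<lambda>x. x / sqrt c) ` {0..S}"
    proof
      fix x assume "x \<in> {0..T}"
      then have "sqrt c * x \<in> {0..S}" using c by (auto simp: S_def mult_left_mono)
      moreover have "x = (sqrt c * x) / sqrt c" using sc by simp
      ultimately show "x \<in> (\<lambda>x. x / sqrt c) ` {0..S}" by blast
    qed
  qed
  have "(\<lambda>x. exp (- (sqrt c * x)\<^sup>2)) = (\<lambda>u. exp (- c * u\<^sup>2))"
    using c by (auto simp: power_mult_distrib)
  with has_integral_stretch_real[OF J sc] img
  have "((\<lambda>u. exp (- c * u\<^sup>2)) has_integral J / sqrt c) {0..T}"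
    using c by simp
  then have "integral {0..T} (\<lambda>u. exp (- c * u\<^sup>2)) = J / sqrt c" by blast
  also have "\<dots> \<le> (sqrt pi / 2) / sqrt c"
    using J_le c by (intro divide_right_mono) auto
  finally show ?thesis by simp
qed

text \<open>On a bounded range the sine is bounded below linearly (Taylor with cubic remainder).\<close>
lemma sin_sq_ge_linear:
  fixes z B :: real
  assumes z: "\<bar>z\<bar> \<le> B" and B: "B\<^sup>2 \<le> 6"
  shows "((1 - B\<^sup>2 / 6) * z)\<^sup>2 \<le> (sin z)\<^sup>2"
proof -
  have "\<bar>sin z - (\<Sum>m<3. sin_coeff m * z ^ m)\<bar> \<le> inverse (fact 3) * \<bar>z\<bar> ^ 3"
    by (rule Maclaurin_sin_bound)
  moreover have "(\<Sum>m<3. sin_coeff m * z ^ m) = z"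
    by (simp add: numeral_3_eq_3 lessThan_Suc sin_coeff_def)
  moreover have "inverse (fact 3 :: real) = 1 / 6" by (simp add: numeral_3_eq_3)
  ultimately have taylor: "\<bar>sin z - z\<bar> \<le> \<bar>z\<bar> * (\<bar>z\<bar>\<^sup>2 / 6)"
    by (simp add: power2_eq_square power3_eq_cube)
  have "\<bar>z\<bar>\<^sup>2 \<le> B\<^sup>2" using z by (metis abs_ge_zero power_mono)
  then have "\<bar>z\<bar> * (\<bar>z\<bar>\<^sup>2 / 6) \<le> \<bar>z\<bar> * (B\<^sup>2 / 6)" by (simp add: mult_left_mono)
  with taylor have "\<bar>z\<bar> - \<bar>z\<bar> * (B\<^sup>2 / 6) \<le> \<bar>sin z\<bar>" by linarith
  then have lower: "(1 - B\<^sup>2 / 6) * \<bar>z\<bar> \<le> \<bar>sin z\<bar>" by (simp add: algebra_simps)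
  have "0 \<le> (1 - B\<^sup>2 / 6) * \<bar>z\<bar>" using B by simp
  with lower have "((1 - B\<^sup>2 / 6) * \<bar>z\<bar>)\<^sup>2 \<le> \<bar>sin z\<bar>\<^sup>2" by (intro power_mono) auto
  then show ?thesis by (simp add: power_mult_distrib)
qed

definition fejer :: "real \<Rightarrow> real \<Rightarrow> real" where
  "fejer \<alpha> y = (if y = 0 then \<alpha> else (sin (\<alpha> * y))\<^sup>2 / (\<alpha> * y\<^sup>2))"

lemma fejer_has_integral:
  fixes \<alpha> y :: real
  assumes a: "\<alpha> > 0"
  shows "((\<lambda>u. (1 - u / (2 * \<alpha>)) * cos (u * y)) has_integral fejer \<alpha> y) {0..2 * \<alpha>}"
proof -
  define F where "F u = (if y = 0 then u - u\<^sup>2 / (4 * \<alpha>)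
      else (1 - u / (2 * \<alpha>)) * sin (u * y) / y - cos (u * y) / (2 * \<alpha> * y\<^sup>2))" for u
  have "(F has_real_derivative ((1 - u / (2 * \<alpha>)) * cos (u * y))) (at u within {0..2 * \<alpha>})" for u
    using a unfolding F_def
    by (cases "y = 0") (auto intro!: derivative_eq_intros simp: field_simps power2_eq_square)
  then have "((\<lambda>u. (1 - u / (2 * \<alpha>)) * cos (u * y)) has_integral (F (2 * \<alpha>) - F 0)) {0..2 * \<alpha>}"
    using a by (intro fundamental_theorem_of_calculus)
      (auto simp: has_real_derivative_iff_has_vector_derivative[symmetric])
  moreover have "F (2 * \<alpha>) - F 0 = fejer \<alpha> y"
  proof (cases "y = 0")
    case True
    then show ?thesis using a by (simp add: F_def fejer_def field_simps power2_eq_square)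
  next
    case False
    have double: "cos (\<alpha> * (y * 2)) = 1 - 2 * (sin (\<alpha> * y) * sin (\<alpha> * y))"
      using cos_double_sin[of "\<alpha> * y"] by (simp add: mult_ac power2_eq_square)
    show ?thesis using a False
      by (simp add: F_def fejer_def field_simps power2_eq_square) (simp add: double algebra_simps)
  qed
  ultimately show ?thesis by simp
qed

lemma fejer_nonneg: "\<alpha> > 0 \<Longrightarrow> fejer \<alpha> y \<ge> 0"
  by (simp add: fejer_def)

lemma fejer_lower:
  fixes \<alpha> y h :: real
  assumes a: "\<alpha> > 0" and y: "\<bar>y\<bar> \<le> h" and ah: "\<alpha> * h \<le> 3/5"
  shows "\<alpha> * (47/50)\<^sup>2 \<le> fejer \<alpha> y"
proof (cases "y = 0")
  case True
  then show ?thesis using a by (simp add: fejer_def power2_eq_square)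
next
  case False
  have "\<bar>\<alpha> * y\<bar> \<le> \<alpha> * h" using a y by (simp add: abs_mult)
  then have "((1 - (3/5)\<^sup>2 / 6) * (\<alpha> * y))\<^sup>2 \<le> (sin (\<alpha> * y))\<^sup>2"
    using ah by (intro sin_sq_ge_linear) (auto simp: power2_eq_square)
  moreover have "((1 - (3/5)\<^sup>2 / 6) * (\<alpha> * y))\<^sup>2 = (47/50)\<^sup>2 * \<alpha>\<^sup>2 * y\<^sup>2"
    by (simp add: power2_eq_square)
  ultimately have "(47/50)\<^sup>2 * \<alpha>\<^sup>2 * y\<^sup>2 \<le> (sin (\<alpha> * y))\<^sup>2" by simp
  then have "((47/50)\<^sup>2 * \<alpha>\<^sup>2 * y\<^sup>2) / (\<alpha> * y\<^sup>2) \<le> (sin (\<alpha> * y))\<^sup>2 / (\<alpha> * y\<^sup>2)"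
    using a False by (intro divide_right_mono) auto
  moreover have "((47/50)\<^sup>2 * \<alpha>\<^sup>2 * y\<^sup>2) / (\<alpha> * y\<^sup>2) = \<alpha> * (47/50)\<^sup>2"
    using a False by (simp add: power2_eq_square field_simps)
  ultimately show ?thesis using False by (simp add: fejer_def)
qed

lemma expectation_cos_le_char:
  fixes P :: "'a pmf" and X :: "'a \<Rightarrow> real"
  assumes fin: "finite (set_pmf P)"
  shows "measure_pmf.expectation P (\<lambda>y. cos (u * (X y - x0)))
           \<le> cmod (measure_pmf.expectation P (\<lambda>y. cis (u * X y)))"
proof -
  have int: "integrable (measure_pmf P) f" for f :: "'a \<Rightarrow> complex"
    using fin by (rule integrable_measure_pmf_finite)
  have "(\<lambda>y. cos (u * (X y - x0))) = (\<lambda>y. Re (cis (- u * x0) * cis (u * X y)))"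
    by (simp only: cis_mult) (simp add: algebra_simps)
  then have "measure_pmf.expectation P (\<lambda>y. cos (u * (X y - x0)))
      = Re (measure_pmf.expectation P (\<lambda>y. cis (- u * x0) * cis (u * X y)))"
    by (simp only: integral_Re[OF int])
  also have "\<dots> = Re (cis (- u * x0) * measure_pmf.expectation P (\<lambda>y. cis (u * X y)))"
    by simp
  also have "\<dots> \<le> cmod (cis (- u * x0) * measure_pmf.expectation P (\<lambda>y. cis (u * X y)))"
    by (rule complex_Re_le_cmod)
  also have "\<dots> = cmod (measure_pmf.expectation P (\<lambda>y. cis (u * X y)))"
    by (simp add: norm_mult)
  finally show ?thesis .
qed

lemma expectation_fejer_le:
  fixes P :: "'a pmf" and X :: "'a \<Rightarrow> real"
  assumes fin: "finite (set_pmf P)" and a: "\<alpha> > 0" and c: "c > 0"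
    and char: "\<And>u. u \<in> {0..2 * \<alpha>} \<Longrightarrow>
                 cmod (measure_pmf.expectation P (\<lambda>y. cis (u * X y))) \<le> exp (- c * u\<^sup>2)"
  shows "measure_pmf.expectation P (\<lambda>y. fejer \<alpha> (X y - x0)) \<le> sqrt pi / (2 * sqrt c)"
proof -
  define F where "F = set_pmf P"
  define E where "E u = measure_pmf.expectation P (\<lambda>y. cos (u * (X y - x0)))" for u
  have as_sum: "measure_pmf.expectation P g = (\<Sum>y\<in>F. g y * pmf P y)" for g :: "'a \<Rightarrow> real"
    using fin unfolding F_def by (intro integral_measure_pmf_real) auto
  have "((\<lambda>u. \<Sum>y\<in>F. (1 - u / (2 * \<alpha>)) * cos (u * (X y - x0)) * pmf P y) has_integral
          (\<Sum>y\<in>F. fejer \<alpha> (X y - x0) * pmf P y)) {0..2 * \<alpha>}"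
    using fin a unfolding F_def
    by (intro has_integral_sum has_integral_mult_left fejer_has_integral) auto
  moreover have "(\<Sum>y\<in>F. (1 - u / (2 * \<alpha>)) * cos (u * (X y - x0)) * pmf P y)
      = (1 - u / (2 * \<alpha>)) * E u" for u
    unfolding E_def as_sum[of "\<lambda>y. cos (u * (X y - x0))"] by (simp add: sum_distrib_left mult.assoc)
  ultimately have lhs: "((\<lambda>u. (1 - u / (2 * \<alpha>)) * E u) has_integral
          measure_pmf.expectation P (\<lambda>y. fejer \<alpha> (X y - x0))) {0..2 * \<alpha>}"
    by (simp only: as_sum[of "\<lambda>y. fejer \<alpha> (X y - x0)"])
  have rhs: "((\<lambda>u. exp (- c * u\<^sup>2)) has_integral integral {0..2 * \<alpha>} (\<lambda>u. exp (- c * u\<^sup>2)))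
      {0..2 * \<alpha>}"
    by (intro integrable_integral integrable_continuous_interval continuous_intros)
  have "measure_pmf.expectation P (\<lambda>y. fejer \<alpha> (X y - x0))
      \<le> integral {0..2 * \<alpha>} (\<lambda>u. exp (- c * u\<^sup>2))"
  proof (rule has_integral_le[OF lhs rhs])
    fix u assume u: "u \<in> {0..2 * \<alpha>}"
    have weight: "0 \<le> 1 - u / (2 * \<alpha>)" "1 - u / (2 * \<alpha>) \<le> 1"
      using u a by (auto simp: field_simps)
    have E_le: "E u \<le> exp (- c * u\<^sup>2)"
      using expectation_cos_le_char[OF fin] char[OF u] unfolding E_def by (rule order_trans)
    show "(1 - u / (2 * \<alpha>)) * E u \<le> exp (- c * u\<^sup>2)"
    proof (cases "E u \<le> 0")
      case True
      then have "(1 - u / (2 * \<alpha>)) * E u \<le> 0" using weight by (simp add: mult_nonneg_nonpos)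
      then show ?thesis using exp_gt_zero[of "- c * u\<^sup>2"] by linarith
    next
      case False
      then have "(1 - u / (2 * \<alpha>)) * E u \<le> E u" using weight by (simp add: mult_left_le_one_le)
      then show ?thesis using E_le by linarith
    qed
  qed
  also have "\<dots> \<le> sqrt pi / (2 * sqrt c)"
    using c a by (intro half_gaussian_integral_le) auto
  finally show ?thesis .
qed

lemma fejer_anticoncentration:
  fixes P :: "'a pmf" and X :: "'a \<Rightarrow> real"
  assumes fin: "finite (set_pmf P)" and a: "\<alpha> > 0" and c: "c > 0" and ah: "\<alpha> * h \<le> 3/5"
    and char: "\<And>u. u \<in> {0..2 * \<alpha>} \<Longrightarrow>
                 cmod (measure_pmf.expectation P (\<lambda>y. cis (u * X y))) \<le> exp (- c * u\<^sup>2)"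
  shows "measure_pmf.prob P {y. \<bar>X y - x0\<bar> \<le> h} \<le> sqrt pi / (2 * sqrt c) / (\<alpha> * (47/50)\<^sup>2)"
proof -
  define m :: real where "m = \<alpha> * (47/50)\<^sup>2"
  have m: "m > 0" using a by (simp add: m_def)
  have int: "integrable (measure_pmf P) f" for f :: "'a \<Rightarrow> real"
    using fin by (rule integrable_measure_pmf_finite)
  have "measure_pmf.prob P {y. \<bar>X y - x0\<bar> \<le> h}
      = measure_pmf.expectation P (indicator {y. \<bar>X y - x0\<bar> \<le> h})"
    by simp
  also have "\<dots> \<le> measure_pmf.expectation P (\<lambda>y. fejer \<alpha> (X y - x0) / m)"
  proof (rule integral_mono[OF int int])
    fix y
    show "indicator {y. \<bar>X y - x0\<bar> \<le> h} y \<le> fejer \<alpha> (X y - x0) / m"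
      using fejer_lower[OF a _ ah, of "X y - x0"] fejer_nonneg[OF a, of "X y - x0"] m
      by (auto simp: indicator_def m_def)
  qed
  also have "\<dots> = measure_pmf.expectation P (\<lambda>y. fejer \<alpha> (X y - x0)) / m"
    by simp
  also have "\<dots> \<le> sqrt pi / (2 * sqrt c) / m"
    using expectation_fejer_le[OF fin a c char] m by (intro divide_right_mono) auto
  finally show ?thesis unfolding m_def .
qed

lemma expectation_pair_pmf_mult:
  fixes f :: "'a \<Rightarrow> 'c::{real_normed_field, banach, second_countable_topology}"
    and g :: "'b \<Rightarrow> 'c"
  assumes A: "finite (set_pmf A)" and B: "finite (set_pmf B)"
  shows "measure_pmf.expectation (pair_pmf A B) (\<lambda>z. f (fst z) * g (snd z))
           = measure_pmf.expectation A f * measure_pmf.expectation B g"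
proof -
  have "measure_pmf.expectation (pair_pmf A B) (\<lambda>z. f (fst z) * g (snd z))
      = (\<Sum>z\<in>set_pmf A \<times> set_pmf B. pmf (pair_pmf A B) z *\<^sub>R (f (fst z) * g (snd z)))"
    using A B by (intro integral_measure_pmf) auto
  also have "\<dots> = (\<Sum>a\<in>set_pmf A. \<Sum>b\<in>set_pmf B. (pmf A a *\<^sub>R f a) * (pmf B b *\<^sub>R g b))"
    unfolding sum.cartesian_product
    by (intro sum.cong) (auto simp: pmf_pair scaleR_conv_of_real mult_ac)
  also have "\<dots> = (\<Sum>a\<in>set_pmf A. pmf A a *\<^sub>R f a) * (\<Sum>b\<in>set_pmf B. pmf B b *\<^sub>R g b)"
    by (simp add: sum_product)
  also have "\<dots> = measure_pmf.expectation A f * measure_pmf.expectation B g"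
    using A B by (simp add: integral_measure_pmf[of "set_pmf A"] integral_measure_pmf[of "set_pmf B"])
  finally show ?thesis .
qed

lemma expectation_Pi_pmf_prod:
  fixes f :: "'i \<Rightarrow> 'a \<Rightarrow> 'c::{real_normed_field, banach, second_countable_topology}"
  assumes "finite I" and fin: "\<And>i. i \<in> I \<Longrightarrow> finite (set_pmf (p i))"
  shows "measure_pmf.expectation (Pi_pmf I dflt p) (\<lambda>y. \<Prod>i\<in>I. f i (y i))
           = (\<Prod>i\<in>I. measure_pmf.expectation (p i) (f i))"
  using assms
proof (induction I rule: finite_induct)
  case (insert j I)
  have "finite (PiE_dflt I dflt (set_pmf \<circ> p))"
    using insert by (intro finite_PiE_dflt) auto
  then have fin_Pi: "finite (set_pmf (Pi_pmf I dflt p))"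
    using set_Pi_pmf_subset'[OF insert.hyps(1)] by (rule finite_subset[rotated])
  have split: "(\<lambda>z. \<Prod>i\<in>insert j I. f i (((snd z)(j := fst z)) i))
      = (\<lambda>z. f j (fst z) * (\<Prod>i\<in>I. f i (snd z i)))"
    using insert.hyps by (intro ext) (auto intro!: prod.cong)
  have "measure_pmf.expectation (Pi_pmf (insert j I) dflt p) (\<lambda>y. \<Prod>i\<in>insert j I. f i (y i))
      = measure_pmf.expectation (pair_pmf (p j) (Pi_pmf I dflt p))
          (\<lambda>z. f j (fst z) * (\<Prod>i\<in>I. f i (snd z i)))"
    by (simp only: Pi_pmf_insert[OF insert.hyps] integral_map_pmf case_prod_unfold split)
  also have "\<dots> = measure_pmf.expectation (p j) (f j) * (\<Prod>i\<in>I. measure_pmf.expectation (p i) (f i))"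
    using expectation_pair_pmf_mult[OF _ fin_Pi, of "p j" "f j" "\<lambda>y. \<Prod>i\<in>I. f i (y i)"] insert
    by simp
  finally show ?case using insert.hyps by simp
qed simp

lemma norm_expectation_cis_bit:
  fixes B :: "bool pmf"
  shows "(cmod (measure_pmf.expectation B (\<lambda>b. cis (a * (if b then 1 else 0)))))\<^sup>2
           = 1 - 4 * pmf B True * pmf B False * (sin (a / 2))\<^sup>2"
proof -
  define p where "p = pmf B True"
  have "measure_pmf.expectation B (\<lambda>b. cis (a * (if b then 1 else 0)))
      = of_real p * cis a + of_real (1 - p)"
    by (subst integral_measure_pmf[of UNIV])
       (auto simp: UNIV_bool p_def pmf_False_conv_True scaleR_conv_of_real)
  then have "(cmod (measure_pmf.expectation B (\<lambda>b. cis (a * (if b then 1 else 0)))))\<^sup>2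
      = (p * cos a + (1 - p))\<^sup>2 + (p * sin a)\<^sup>2"
    by (simp add: cmod_power2)
  also have "\<dots> = p\<^sup>2 + 2 * p * (1 - p) * cos a + (1 - p)\<^sup>2"
    using sin_cos_squared_add[of a] by algebra
  also have "\<dots> = 1 - 4 * p * (1 - p) * (sin (a / 2))\<^sup>2"
  proof -
    have cos_a: "cos a = 1 - 2 * (sin (a / 2))\<^sup>2" using cos_double_sin[of "a / 2"] by simp
    show ?thesis by (simp only: cos_a) (simp add: power2_eq_square algebra_simps)
  qed
  finally show ?thesis by (simp add: p_def pmf_False_conv_True)
qed

lemma pmf_noisy_bit_True:
  assumes "0 \<le> \<gamma>" "\<gamma> \<le> 1"
  shows "pmf (noisy_bit \<gamma> b) True = (if b then 1 - \<gamma> / 2 else \<gamma> / 2)"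
  using assms unfolding noisy_bit_def pmf_bind
  by (subst integral_bernoulli_pmf) (auto simp: pmf_return)

lemma norm_expectation_cis_noisy_bit:
  assumes "0 \<le> \<gamma>" "\<gamma> \<le> 1"
  shows "(cmod (measure_pmf.expectation (noisy_bit \<gamma> b) (\<lambda>y. cis (a * (if y then 1 else 0)))))\<^sup>2
           \<le> 1 - \<gamma> * (sin (a / 2))\<^sup>2"
proof -
  have "4 * pmf (noisy_bit \<gamma> b) True * pmf (noisy_bit \<gamma> b) False = \<gamma> * (2 - \<gamma>)"
    using assms by (simp add: pmf_False_conv_True pmf_noisy_bit_True algebra_simps)
  also have "\<dots> \<ge> \<gamma>"
    using assms mult_nonneg_nonneg[of \<gamma> "1 - \<gamma>"] by (simp add: algebra_simps)
  finally show ?thesis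
    by (simp add: norm_expectation_cis_bit mult_right_mono)
qed

lemma cis_sum: "cis (sum f A) = (\<Prod>x\<in>A. cis (f x))"
  by (induction A rule: infinite_finite_induct) (auto simp: cis_mult[symmetric])

lemma norm_char_noisy_sum:
  assumes "0 \<le> \<gamma>" "\<gamma> \<le> 1"
  shows "(cmod (measure_pmf.expectation (Pi_pmf {..<n} False (\<lambda>i. noisy_bit \<gamma> (x i)))
            (\<lambda>y. cis (u * bit_inner n w y))))\<^sup>2
         \<le> (\<Prod>i<n. 1 - \<gamma> * (sin (u * w i / 2))\<^sup>2)"
proof -
  define f where "f i = (\<lambda>b. cis (u * w i * (if b then 1 else 0)))" for i
  have "cis (u * bit_inner n w y) = (\<Prod>i<n. f i (y i))" for y
    by (simp add: bit_inner_def f_def sum_distrib_left cis_sum mult.assoc)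
  then have "measure_pmf.expectation (Pi_pmf {..<n} False (\<lambda>i. noisy_bit \<gamma> (x i)))
               (\<lambda>y. cis (u * bit_inner n w y))
      = (\<Prod>i<n. measure_pmf.expectation (noisy_bit \<gamma> (x i)) (f i))"
    by (simp add: expectation_Pi_pmf_prod finite_subset[OF subset_UNIV])
  then have "(cmod (measure_pmf.expectation (Pi_pmf {..<n} False (\<lambda>i. noisy_bit \<gamma> (x i)))
               (\<lambda>y. cis (u * bit_inner n w y))))\<^sup>2
      = (\<Prod>i<n. (cmod (measure_pmf.expectation (noisy_bit \<gamma> (x i)) (f i)))\<^sup>2)"
    by (simp add: prod_norm[symmetric] prod_power_distrib)
  also have "\<dots> \<le> (\<Prod>i<n. 1 - \<gamma> * (sin (u * w i / 2))\<^sup>2)"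
    using norm_expectation_cis_noisy_bit[OF assms] by (intro prod_mono) (simp add: f_def)
  finally show ?thesis .
qed

lemma char_noisy_sum_gaussian_decay:
  assumes tau: "\<forall>i<n. \<bar>w i\<bar> \<le> \<tau>" and norm: "(\<Sum>i<n. (w i)\<^sup>2) = 1"
    and \<gamma>: "0 \<le> \<gamma>" "\<gamma> \<le> 1" and u: "\<bar>u\<bar> * \<tau> \<le> 14/5"
  shows "cmod (measure_pmf.expectation (Pi_pmf {..<n} False (\<lambda>i. noisy_bit \<gamma> (x i)))
            (\<lambda>y. cis (u * bit_inner n w y)))
         \<le> exp (- (\<gamma> * (101/150)\<^sup>2 / 8) * u\<^sup>2)"
proof -
  define \<kappa> :: real where "\<kappa> = 101/150"
  define s where "s i = (sin (u * w i / 2))\<^sup>2" for i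
  have sin_lower: "\<kappa>\<^sup>2 * (u\<^sup>2 / 4) * (w i)\<^sup>2 \<le> s i" if "i < n" for i
  proof -
    have "\<bar>u * w i / 2\<bar> \<le> \<bar>u\<bar> * \<tau> / 2"
      using tau that by (simp add: abs_mult mult_left_mono)
    then have "((1 - (7/5)\<^sup>2 / 6) * (u * w i / 2))\<^sup>2 \<le> s i"
      unfolding s_def using u by (intro sin_sq_ge_linear) (auto simp: power2_eq_square)
    moreover have "\<kappa>\<^sup>2 * (u\<^sup>2 / 4) * (w i)\<^sup>2 = ((1 - (7/5)\<^sup>2 / 6) * (u * w i / 2))\<^sup>2"
      by (simp add: \<kappa>_def power2_eq_square)
    ultimately show ?thesis by linarith
  qed
  have "(\<Prod>i<n. 1 - \<gamma> * s i) \<le> (\<Prod>i<n. exp (- (\<gamma> * s i)))"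
  proof (intro prod_mono conjI)
    fix i
    have "\<gamma> * s i \<le> 1 * 1"
      using \<gamma> by (intro mult_mono) (auto simp: s_def abs_square_le_1)
    then show "0 \<le> 1 - \<gamma> * s i" by simp
    show "1 - \<gamma> * s i \<le> exp (- (\<gamma> * s i))"
      using exp_ge_add_one_self[of "- (\<gamma> * s i)"] by simp
  qed
  also have "\<dots> = exp (- (\<gamma> * (\<Sum>i<n. s i)))"
    by (simp add: exp_sum[symmetric] sum_negf sum_distrib_left)
  also have "\<dots> \<le> exp (- (\<gamma> * (\<kappa>\<^sup>2 * (u\<^sup>2 / 4))))"
  proof -
    have "\<kappa>\<^sup>2 * (u\<^sup>2 / 4) = \<kappa>\<^sup>2 * (u\<^sup>2 / 4) * (\<Sum>i<n. (w i)\<^sup>2)"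
      using norm by simp
    also have "\<dots> = (\<Sum>i<n. \<kappa>\<^sup>2 * (u\<^sup>2 / 4) * (w i)\<^sup>2)"
      by (rule sum_distrib_left)
    also have "\<dots> \<le> (\<Sum>i<n. s i)" using sin_lower by (intro sum_mono) auto
    finally have "\<gamma> * (\<kappa>\<^sup>2 * (u\<^sup>2 / 4)) \<le> \<gamma> * (\<Sum>i<n. s i)"
      using \<gamma> by (intro mult_left_mono) auto
    then show ?thesis by simp
  qed
  also have "\<dots> = (exp (- (\<gamma> * \<kappa>\<^sup>2 / 8) * u\<^sup>2))\<^sup>2"
    by (simp add: power2_eq_square exp_add[symmetric])
  finally have "(cmod (measure_pmf.expectation (Pi_pmf {..<n} False (\<lambda>i. noisy_bit \<gamma> (x i)))
            (\<lambda>y. cis (u * bit_inner n w y))))\<^sup>2 \<le> (exp (- (\<gamma> * \<kappa>\<^sup>2 / 8) * u\<^sup>2))\<^sup>2"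
    using norm_char_noisy_sum[OF \<gamma>, of n x u w] unfolding s_def by linarith
  then show ?thesis unfolding \<kappa>_def by (rule power2_le_imp_le) simp
qed

lemma anticoncentration_constant:
  fixes \<gamma> \<tau> h \<alpha> :: real
  assumes \<gamma>: "\<gamma> > 0" and \<tau>: "\<tau> > 0" and h: "h \<ge> 0"
    and \<alpha>: "\<alpha> = 1 / (5 * \<tau> / 7 + 5 * h / 3)"
  shows "sqrt pi / (2 * sqrt (\<gamma> * (101/150)\<^sup>2 / 8)) / (\<alpha> * (47/50)\<^sup>2)
           \<le> 8 * h / sqrt \<gamma> + 4 * \<tau> / sqrt \<gamma>"
proof -
  define k :: real where "k = (101/150) * (47/50)\<^sup>2"
  define L where "L = 5 * \<tau> / 7 + 5 * h / 3"
  have L: "L > 0" using \<tau> h by (simp add: L_def)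
  have sqrt8: "sqrt 8 = 2 * sqrt (2::real)"
    using real_sqrt_mult[of 4 2] by simp
  have sqrt_c: "sqrt (\<gamma> * (101/150)\<^sup>2 / 8) = sqrt \<gamma> * (101/150) / (2 * sqrt 2)"
    by (simp add: real_sqrt_mult real_sqrt_divide sqrt8)
  have "sqrt pi / (2 * sqrt (\<gamma> * (101/150)\<^sup>2 / 8)) / (\<alpha> * (47/50)\<^sup>2)
      = sqrt (2 * pi) * L / (k * sqrt \<gamma>)"
    unfolding sqrt_c \<alpha> L_def using \<gamma> L[unfolded L_def] by (simp add: k_def real_sqrt_mult field_simps)
  also have "\<dots> \<le> (251/100) * L / (k * sqrt \<gamma>)"
  proof -
    have "sqrt (2 * pi) \<le> sqrt ((251/100)\<^sup>2)"
      using pi_approx(2) by (intro real_sqrt_le_mono) (simp add: power2_eq_square)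
    then show ?thesis using \<gamma> L by (intro divide_right_mono mult_right_mono) (auto simp: k_def)
  qed
  also have "\<dots> \<le> (8 * h + 4 * \<tau>) / sqrt \<gamma>"
  proof -
    have "(251/100) * L \<le> k * (8 * h + 4 * \<tau>)"
      using \<tau> h by (simp add: L_def k_def power2_eq_square)
    then have "(251/100) * L / k \<le> 8 * h + 4 * \<tau>"
      by (simp add: k_def pos_divide_le_eq mult.commute)
    then have "(251/100) * L / k / sqrt \<gamma> \<le> (8 * h + 4 * \<tau>) / sqrt \<gamma>"
      using \<gamma> by (intro divide_right_mono) auto
    then show ?thesis by (simp add: mult_ac)
  qed
  finally show ?thesis by (simp add: add_divide_distrib)
qed

lemma noisy_sum_anticoncentration:
  assumes tau: "\<forall>i<n. \<bar>w i\<bar> \<le> \<tau>" and \<tau>: "\<tau> > 0" and norm: "(\<Sum>i<n. (w i)\<^sup>2) = 1"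
    and \<gamma>: "0 < \<gamma>" "\<gamma> \<le> 1" and ab: "a \<le> b"
  shows "measure_pmf.prob (Pi_pmf {..<n} False (\<lambda>i. noisy_bit \<gamma> (x i)))
            {y. bit_inner n w y \<in> {a..b}}
         \<le> 4 * (b - a) / sqrt \<gamma> + 4 * \<tau> / sqrt \<gamma>"
proof -
  define P where "P = Pi_pmf {..<n} False (\<lambda>i. noisy_bit \<gamma> (x i))"
  define h where "h = (b - a) / 2"
  define \<alpha> where "\<alpha> = 1 / (5 * \<tau> / 7 + 5 * h / 3)"
  define c where "c = \<gamma> * (101/150)\<^sup>2 / 8"
  have h: "h \<ge> 0" using ab by (simp add: h_def)
  have \<alpha>: "\<alpha> > 0" using \<tau> h by (simp add: \<alpha>_def)
  have c: "c > 0" using \<gamma> by (simp add: c_def)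
  have "\<alpha> * h \<le> 3/5" and "2 * \<alpha> * \<tau> \<le> 14/5"
    using \<tau> h by (auto simp: \<alpha>_def field_simps)
  have fin: "finite (set_pmf P)"
    unfolding P_def by (rule finite_subset[OF set_Pi_pmf_subset']) auto
  have char: "cmod (measure_pmf.expectation P (\<lambda>y. cis (u * bit_inner n w y))) \<le> exp (- c * u\<^sup>2)"
    if "u \<in> {0..2 * \<alpha>}" for u
  proof -
    have "\<bar>u\<bar> * \<tau> \<le> 2 * \<alpha> * \<tau>" using that \<tau> by (intro mult_right_mono) auto
    then show ?thesis unfolding P_def c_def
      using char_noisy_sum_gaussian_decay[OF tau norm less_imp_le[OF \<gamma>(1)] \<gamma>(2)]
        \<open>2 * \<alpha> * \<tau> \<le> 14/5\<close> by simp
  qed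
  have "{y. bit_inner n w y \<in> {a..b}} = {y. \<bar>bit_inner n w y - (a + b) / 2\<bar> \<le> h}"
    by (auto simp: h_def abs_le_iff field_simps)
  then have "measure_pmf.prob P {y. bit_inner n w y \<in> {a..b}}
      \<le> sqrt pi / (2 * sqrt c) / (\<alpha> * (47/50)\<^sup>2)"
    using fejer_anticoncentration[OF fin \<alpha> c \<open>\<alpha> * h \<le> 3/5\<close> char] by simp
  also have "\<dots> \<le> 8 * h / sqrt \<gamma> + 4 * \<tau> / sqrt \<gamma>"
    unfolding c_def by (rule anticoncentration_constant[OF \<gamma>(1) \<tau> h \<alpha>_def])
  also have "8 * h = 4 * (b - a)" by (simp add: h_def)
  finally show ?thesis by (simp add: P_def)
qed

lemma prob_bind_pmf_le:
  fixes D :: "'a pmf" and N :: "'a \<Rightarrow> 'b pmf"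
  assumes bound: "\<And>x. x \<in> set_pmf D \<Longrightarrow> measure_pmf.prob (N x) E \<le> B"
  shows "measure_pmf.prob (bind_pmf D N) E \<le> B"
proof -
  obtain x where "x \<in> set_pmf D" using set_pmf_not_empty[of D] by blast
  then have B: "B \<ge> 0" using bound[of x] measure_nonneg[of "N x" E] by linarith
  have "ennreal (measure_pmf.prob (bind_pmf D N) E) = (\<integral>\<^sup>+x. emeasure (N x) E \<partial>D)"
    by (simp add: measure_pmf.emeasure_eq_measure[symmetric])
  also have "\<dots> \<le> (\<integral>\<^sup>+x. ennreal B \<partial>D)"
    using bound by (intro nn_integral_mono_AE AE_pmfI)
      (simp add: measure_pmf.emeasure_eq_measure ennreal_leI)
  also have "\<dots> = ennreal B" by (simp add: measure_pmf.emeasure_space_1)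
  finally show ?thesis using B by (simp add: ennreal_le_iff)
qed

theorem lemma2p3:
  fixes n :: nat and \<tau> \<gamma> a b :: real and w :: "nat \<Rightarrow> real"
    and D :: "(nat \<Rightarrow> bool) pmf"
  assumes "tau_regular n \<tau> w"
    and "(\<Sum>i<n. (w i)\<^sup>2) = 1"
    and "0 < \<gamma>" and "\<gamma> \<le> 1"
  shows "measure_pmf.prob (noisy_version n \<gamma> D) {y. bit_inner n w y \<in> {a..b}}
    \<le> 4 * \<bar>b - a\<bar> / sqrt \<gamma> + 4 * \<tau> / sqrt \<gamma> + 2 * exp (- (\<gamma>\<^sup>2) / (2 * \<tau>\<^sup>2))"
proof -
  have tau: "\<forall>i<n. \<bar>w i\<bar> \<le> \<tau>" using assms(1,2) by (simp add: tau_regular_def)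
  have \<tau>: "\<tau> > 0"
  proof (rule ccontr)
    assume "\<not> \<tau> > 0"
    then have "w i = 0" if "i < n" for i
      using tau that by (meson abs_le_zero_iff dual_order.trans not_le)
    then have "(\<Sum>i<n. (w i)\<^sup>2) = 0" by simp
    with assms(2) show False by simp
  qed
  have "measure_pmf.prob (noisy_version n \<gamma> D) {y. bit_inner n w y \<in> {a..b}}
      \<le> 4 * \<bar>b - a\<bar> / sqrt \<gamma> + 4 * \<tau> / sqrt \<gamma>"
  proof (cases "a \<le> b")
    case True
    show ?thesis
      unfolding noisy_version_def
      using noisy_sum_anticoncentration[OF tau \<tau> assms(2-4) True] True
      by (intro prob_bind_pmf_le) simp
  next
    case False
    then show ?thesis using \<tau> assms(3) by simp
  qed
  then show ?thesis by (simp add: add_increasing2)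
qed

end
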